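(* Let $\mathcal A_1,\dots,\mathcal A_d\subset\mathbb Z^d$ be finite sets such that the Cayley configuration $C(\mathcal A_1,\dots,\mathcal A_d)$ contains a $(2d-1)$-simplex, let $\mathcal A=\bigcup_i\mathcal A_i=\{a_1,\dots,a_n\}$ and $C=(c_{ij})\in\mathbb R^{d\times n}$ with $c_{ij}=0$ whenever $a_j\notin\mathcal A_i$. Assume there are $p$ mixed $(2d-1)$-simplices $\Delta_1,\dots,\Delta_p$ which occur in a regular subdivision $\Gamma$ of $C(\mathcal A_1,\dots,\mathcal A_d)$ and which are positively decorated by $C$. Let $h$ be a height function inducing $\Gamma$ and define $h^{(i)}(a_j)=h(a_j,e_i)$ for $a_j\in\mathcal A_i$. Then there exists $t_0>0$ such that for all $0<t<t_0$ the system \[ f_{i,t}(x)=\sum_{a_j\in\mathcal A_i}c_{ij}\,t^{h^{(i)}(a_j)}\,x^{a_j}=0,\qquad i=1,\dots,d, \] has at least $p$ nondegenerate solutions in $\mathbb R^d_{>0}$. In particular, the result holds if $\Delta_1,\Delta_2$ are two positively decorated mixed $(2d-1)$-simplices of $C(\mathcal A_1,\dots,\mathcal A_d)$ which share a facet.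
   Context: $e_1,\dots,e_d$ is the canonical basis of $\mathbb Z^d$. The Cayley configuration is $C(\mathcal A_1,\dots,\mathcal A_d)=\bigcup_{i=1}^d(\mathcal A_i\times\{e_i\})\subset\mathbb Z^d\times\mathbb Z^d$. A $(2d-1)$-simplex of it is a subset of $2d$ affinely independent points. It is mixed if it consists of exactly two points $(a_{j_1},e_i),(a_{j_2},e_i)$ (with $a_{j_1},a_{j_2}\in\mathcal A_i$) for each $i=1,\dots,d$; it is positively decorated by $C$ if $c_{i,j_1}c_{i,j_2}<0$ for each $i$. Regular subdivisions of a finite point configuration $P\subset\mathbb R^N$ (here $N=2d$) are defined by a height function $h:P\to\mathbb R$: lift each $q\in P$ to $(q,h(q))$; the lower faces of the convex hull of the lifted points are those having an inner normal with positive last coordinate; each lower face $F$ gives the cell $\{q:(q,h(q))\in F\}$; the cells form the regular subdivision induced by $h$, and a simplex occurs in it if it is a cell. Two simplices share a facet if the intersection of their convex hulls is a facet of both. A solution is nondegenerate if the Jacobian determinant of $(f_{1,t},\dots,f_{d,t})$ does not vanish at it. *)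

theory Defs
  imports "HOL-Analysis.Analysis"
begin

type_synonym 'd pt = "(real^'d) \<times> (real^'d)"

definition cay_pt :: "int^'d \<Rightarrow> 'd::finite \<Rightarrow> 'd pt" where
  "cay_pt a i = ((\<chi> k. real_of_int (a $ k)), axis i 1)"

definition cayley :: "('d::finite \<Rightarrow> (int^'d) set) \<Rightarrow> 'd pt set" where
  "cayley A = {cay_pt a i | a i. a \<in> A i}"

definition is_simplex :: "'d::finite pt set \<Rightarrow> 'd pt set \<Rightarrow> bool" where
  "is_simplex P S \<longleftrightarrow> S \<subseteq> P \<and> finite S \<and> card S = 2 * CARD('d) \<and> \<not> affine_dependent S"

definition mixed_simplex :: "('d::finite \<Rightarrow> (int^'d) set) \<Rightarrow> 'd pt set \<Rightarrow> bool" where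
  "mixed_simplex A S \<longleftrightarrow> is_simplex (cayley A) S \<and>
     (\<forall>i. card {a. a \<in> A i \<and> cay_pt a i \<in> S} = 2)"

definition pos_decorated :: "('d::finite \<Rightarrow> (int^'d) set) \<Rightarrow> ('d \<Rightarrow> int^'d \<Rightarrow> real) \<Rightarrow> 'd pt set \<Rightarrow> bool" where
  "pos_decorated A c S \<longleftrightarrow> (\<forall>i. \<exists>a1 a2. {a. a \<in> A i \<and> cay_pt a i \<in> S} = {a1, a2} \<and> a1 \<noteq> a2 \<and>
       c i a1 * c i a2 < 0)"

definition lower_face :: "'d::finite pt set \<Rightarrow> ('d pt \<Rightarrow> real) \<Rightarrow> ('d pt \<times> real) set \<Rightarrow> bool" where
  "lower_face P h F \<longleftrightarrow>
     (let Q = convex hull ((\<lambda>q. (q, h q)) ` P) in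
       F \<noteq> {} \<and> (\<exists>u. snd u > 0 \<and> F = {x \<in> Q. \<forall>y\<in>Q. inner u x \<le> inner u y}))"

definition occurs_in_reg_subdiv :: "'d::finite pt set \<Rightarrow> ('d pt \<Rightarrow> real) \<Rightarrow> 'd pt set \<Rightarrow> bool" where
  "occurs_in_reg_subdiv P h S \<longleftrightarrow>
     (\<exists>F. lower_face P h F \<and> S = {q \<in> P. (q, h q) \<in> F})"

definition monom :: "real^'d \<Rightarrow> int^'d::finite \<Rightarrow> real" where
  "monom x a = (\<Prod>k\<in>UNIV. (x $ k) powr (real_of_int (a $ k)))"

definition sys :: "('d::finite \<Rightarrow> (int^'d) set) \<Rightarrow> ('d \<Rightarrow> int^'d \<Rightarrow> real) \<Rightarrow> ('d pt \<Rightarrow> real)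
                   \<Rightarrow> real \<Rightarrow> real^'d \<Rightarrow> real^'d" where
  "sys A c h t x = (\<chi> i. \<Sum>a\<in>A i. c i a * t powr (h (cay_pt a i)) * monom x a)"

definition nondeg_pos_solution :: "(real^'d::finite \<Rightarrow> real^'d) \<Rightarrow> real^'d \<Rightarrow> bool" where
  "nondeg_pos_solution F x \<longleftrightarrow> (\<forall>k. x $ k > 0) \<and> F x = 0 \<and>
     F differentiable (at x) \<and> det (jacobian F (at x)) \<noteq> 0"

definition many_solutions :: "('d::finite \<Rightarrow> (int^'d) set) \<Rightarrow> ('d \<Rightarrow> int^'d \<Rightarrow> real) \<Rightarrow> ('d pt \<Rightarrow> real)
                   \<Rightarrow> nat \<Rightarrow> bool" where
  "many_solutions A c h p \<longleftrightarrow> (\<exists>t0>0. \<forall>t. 0 < t \<and> t < t0 \<longrightarrow>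
     (\<exists>X. finite X \<and> card X \<ge> p \<and> (\<forall>x\<in>X. nondeg_pos_solution (sys A c h t) x)))"

definition share_facet :: "'d::finite pt set \<Rightarrow> 'd pt set \<Rightarrow> bool" where
  "share_facet S1 S2 \<longleftrightarrow> (convex hull S1 \<inter> convex hull S2) facet_of (convex hull S1) \<and>
                         (convex hull S1 \<inter> convex hull S2) facet_of (convex hull S2)"

end

theory Submission
  imports Defs
begin

text \<open>
  For a simplex \<Delta> occurring in the regular subdivision induced by h there are w and \<lambda>
  such that the slack <a, w> + \<lambda>_i + h(a, e_i) is nonnegative on the configuration and
  vanishes exactly on \<Delta>. Substituting x = t^w e^z and multiplying the i-th equation by
  t^\<lambda>_i turns the system into exponential sums in z whose coefficients c_ia t^slack
  converge, as t \<rightarrow> 0, to those of the binomial system supported on \<Delta>. When \<Delta> is mixed and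
  positively decorated this binomial system has a nondegenerate zero, because affine
  independence of \<Delta> makes its edge vectors linearly independent; and nondegenerate zeros
  survive small C^1 perturbations, by Brouwer's fixed point theorem applied to a chord map.
  Distinct mixed cells have distinct w, so the solutions t^w e^z obtained from different cells
  separate as t \<rightarrow> 0.

  If two simplices share a facet, let l be an affine function vanishing on the facet. Their
  remaining vertices lie on opposite sides of it, as otherwise the two convex hulls would meet
  outside the facet; so the height |l| on the vertices of both simplices, and a large constant
  elsewhere, makes both of them cells.
\<close>

section \<open>Persistence of nondegenerate zeros\<close>

lemma fixed_point_half_lipschitz_cball:
  fixes \<Phi> :: "'a::euclidean_space \<Rightarrow> 'a"
  assumes lip: "(1/2)-lipschitz_on (cball z0 r) \<Phi>"
    and centre: "dist (\<Phi> z0) z0 \<le> r / 2"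
  obtains z where "z \<in> cball z0 r" and "\<Phi> z = z"
proof (rule brouwer[OF compact_cball convex_cball])
  have "0 \<le> r"
    using centre zero_le_dist[of "\<Phi> z0" z0] by linarith
  then show "cball z0 r \<noteq> {}"
    by simp
  show "continuous_on (cball z0 r) \<Phi>"
    using lip by (rule lipschitz_on_continuous_on)
  show "\<Phi> \<in> cball z0 r \<rightarrow> cball z0 r"
  proof
    fix z assume z: "z \<in> cball z0 r"
    have "dist (\<Phi> z) (\<Phi> z0) \<le> 1/2 * dist z z0"
      using lipschitz_onD[OF lip z, of z0] \<open>0 \<le> r\<close> by simp
    then show "\<Phi> z \<in> cball z0 r"
      using z centre dist_triangle[of "\<Phi> z" z0 "\<Phi> z0"] by (simp add: dist_commute)
  qed
qed

lemma inj_if_close_to_bounded_below: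
  fixes M L :: "'a::real_normed_vector \<Rightarrow> 'b::real_normed_vector"
  assumes "linear M" and "B > 0"
    and below: "\<And>v. B * norm v \<le> norm (L v)"
    and close: "\<And>v. norm (M v - L v) \<le> B / 2 * norm v"
  shows "inj M"
proof (rule linear_inj_iff_eq_0[OF \<open>linear M\<close>, THEN iffD2], intro allI impI)
  fix v assume "M v = 0"
  then have "B * norm v \<le> B / 2 * norm v"
    using below[of v] close[of v] by simp
  then show "v = 0"
    using \<open>B > 0\<close> by (simp add: mult_le_cancel_right)
qed

lemma half_lipschitz_chord_map:
  fixes G :: "'a::euclidean_space \<Rightarrow> 'a"
  assumes "linear Li" and Li_L: "\<And>v. Li (L v) = v" and Li_bound: "\<And>y. norm (Li y) \<le> norm y / B"
    and "B > 0" and der: "\<And>z. (G has_derivative G' z) (at z)"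
    and close: "\<And>z v. z \<in> cball z0 r \<Longrightarrow> norm (G' z v - L v) \<le> B / 2 * norm v"
  shows "(1/2)-lipschitz_on (cball z0 r) (\<lambda>z. z - Li (G z))"
proof (rule lipschitz_onI)
  fix x y assume xy: "x \<in> cball z0 r" "y \<in> cball z0 r"
  have "norm ((x - Li (G x)) - (y - Li (G y))) \<le> 1/2 * norm (x - y)"
  proof (rule differentiable_bound[where f' = "\<lambda>z v. Li (L v - G' z v)" and S = "cball z0 r"])
    show "((\<lambda>z. z - Li (G z)) has_derivative (\<lambda>v. Li (L v - G' z v))) (at z within cball z0 r)" for z
    proof (rule has_derivative_at_withinI)
      have "((\<lambda>z. z - Li (G z)) has_derivative (\<lambda>v. v - Li (G' z v))) (at z)"
        by (intro has_derivative_diff has_derivative_ident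
            has_derivative_compose[OF der linear_imp_has_derivative[OF \<open>linear Li\<close>]])
      moreover have "v - Li (G' z v) = Li (L v - G' z v)" for v
        by (simp add: linear_diff[OF \<open>linear Li\<close>] Li_L)
      ultimately show "((\<lambda>z. z - Li (G z)) has_derivative (\<lambda>v. Li (L v - G' z v))) (at z)"
        by simp
    qed
    show "onorm (\<lambda>v. Li (L v - G' z v)) \<le> 1/2" if "z \<in> cball z0 r" for z
    proof (rule onorm_le)
      fix v
      have "norm (Li (L v - G' z v)) \<le> norm (G' z v - L v) / B"
        using Li_bound by (simp add: norm_minus_commute)
      also have "\<dots> \<le> 1/2 * norm v"
        using close[OF that, of v] \<open>B > 0\<close> by (simp add: field_simps)
      finally show "norm (Li (L v - G' z v)) \<le> 1/2 * norm v" .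
    qed
  qed (use xy in auto)
  then show "dist (x - Li (G x)) (y - Li (G y)) \<le> 1/2 * dist x y"
    by (simp add: dist_norm)
qed simp

lemma zero_near_if_derivative_close:
  fixes G :: "'a::euclidean_space \<Rightarrow> 'a"
  assumes "linear L" and "B > 0" and below: "\<And>v. B * norm v \<le> norm (L v)"
    and der: "\<And>z. (G has_derivative G' z) (at z)"
    and close: "\<And>z v. z \<in> cball z0 r \<Longrightarrow> norm (G' z v - L v) \<le> B / 2 * norm v"
    and small: "norm (G z0) \<le> B * r / 2"
  obtains z where "z \<in> cball z0 r" and "G z = 0" and "inj (G' z)"
proof -
  have "inj L"
    using \<open>linear L\<close> \<open>B > 0\<close> below
    by (intro inj_if_close_to_bounded_below[where L = L and B = B]) simp_all
  then obtain Li where "linear Li" and "Li \<circ> L = id"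
    using linear_injective_left_inverse \<open>linear L\<close> by blast
  then have Li_L: "Li (L v) = v" and L_Li: "L (Li y) = y" for v y
    using linear_inverse_left[OF \<open>linear L\<close>] by (metis pointfree_idE)+
  have Li_bound: "norm (Li y) \<le> norm y / B" for y
    using below[of "Li y"] \<open>B > 0\<close> by (simp add: L_Li field_simps)
  have lip: "(1/2)-lipschitz_on (cball z0 r) (\<lambda>z. z - Li (G z))"
    using \<open>linear Li\<close> Li_L Li_bound \<open>B > 0\<close> der close by (rule half_lipschitz_chord_map)
  have "dist (z0 - Li (G z0)) z0 \<le> norm (G z0) / B"
    using Li_bound[of "G z0"] by (simp add: dist_norm)
  also have "\<dots> \<le> r / 2"
    using small \<open>B > 0\<close> by (simp add: divide_le_eq mult.commute)
  finally obtain z where z: "z \<in> cball z0 r" "z - Li (G z) = z"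
    by (rule fixed_point_half_lipschitz_cball[OF lip])
  then have "G z = 0"
    using L_Li[of "G z"] linear_0[OF \<open>linear L\<close>] by simp
  moreover have "inj (G' z)"
    using has_derivative_linear[OF der] \<open>B > 0\<close> below close[OF z(1)]
    by (rule inj_if_close_to_bounded_below)
  ultimately show thesis
    using z(1) that by blast
qed

lemma nondegenerate_zero_persists:
  fixes G :: "'p \<Rightarrow> 'a::euclidean_space \<Rightarrow> 'a" and G' :: "'p \<Rightarrow> 'a \<Rightarrow> 'a \<Rightarrow> 'a"
  assumes "linear L" "inj L"
    and der: "\<And>t z. (G t has_derivative G' t z) (at z)"
    and close: "\<And>e. e > 0 \<Longrightarrow>
      \<exists>r>0. eventually (\<lambda>t. \<forall>z\<in>cball z0 r. \<forall>v. norm (G' t z v - L v) \<le> e * norm v) F"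
    and lim: "((\<lambda>t. G t z0) \<longlongrightarrow> 0) F"
    and "r > 0"
  shows "eventually (\<lambda>t. \<exists>z\<in>cball z0 r. G t z = 0 \<and> inj (G' t z)) F"
proof -
  obtain B where "B > 0" and below: "\<And>v. B * norm v \<le> norm (L v)"
    using linear_inj_bounded_below_pos[OF \<open>linear L\<close> \<open>inj L\<close>] by blast
  obtain r1 where "r1 > 0" and ev_close:
    "eventually (\<lambda>t. \<forall>z\<in>cball z0 r1. \<forall>v. norm (G' t z v - L v) \<le> B / 2 * norm v) F"
    using close[of "B / 2"] \<open>B > 0\<close> by auto
  define r' where "r' = min r r1"
  have "r' > 0" and "cball z0 r' \<subseteq> cball z0 r" "cball z0 r' \<subseteq> cball z0 r1"
    using \<open>r1 > 0\<close> \<open>r > 0\<close> by (auto simp: r'_def)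
  have "eventually (\<lambda>t. norm (G t z0) < B * r' / 2) F"
    using tendstoD[OF lim, of "B * r' / 2"] \<open>r' > 0\<close> \<open>B > 0\<close> by simp
  with ev_close show ?thesis
  proof eventually_elim
    case (elim t)
    obtain z where "z \<in> cball z0 r'" "G t z = 0" "inj (G' t z)"
    proof (rule zero_near_if_derivative_close[OF \<open>linear L\<close> \<open>B > 0\<close> below der])
      show "norm (G' t z v - L v) \<le> B / 2 * norm v" if "z \<in> cball z0 r'" for z v
        using elim(1) that \<open>cball z0 r' \<subseteq> cball z0 r1\<close> by blast
    qed (use elim(2) in auto)
    then show ?case
      using \<open>cball z0 r' \<subseteq> cball z0 r\<close> by blast
  qed
qed

section \<open>Exponential sums\<close>

definition rvec :: "int^'d::finite \<Rightarrow> real^'d" where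
  "rvec a = (\<chi> k. real_of_int (a $ k))"

definition expsum :: "('d::finite \<Rightarrow> (int^'d) set) \<Rightarrow> ('d \<Rightarrow> int^'d \<Rightarrow> real) \<Rightarrow> real^'d \<Rightarrow> real^'d" where
  "expsum A g z = (\<chi> i. \<Sum>a\<in>A i. g i a * exp (rvec a \<bullet> z))"

definition expsum_deriv ::
  "('d::finite \<Rightarrow> (int^'d) set) \<Rightarrow> ('d \<Rightarrow> int^'d \<Rightarrow> real) \<Rightarrow> real^'d \<Rightarrow> real^'d \<Rightarrow> real^'d" where
  "expsum_deriv A g z v = (\<chi> i. \<Sum>a\<in>A i. g i a * exp (rvec a \<bullet> z) * (rvec a \<bullet> v))"

lemma has_derivative_expsum:
  fixes A :: "'d::finite \<Rightarrow> (int^'d) set"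
  shows "(expsum A g has_derivative expsum_deriv A g z) (at z)"
proof (subst has_derivative_componentwise_within, intro ballI)
  fix b :: "real^'d" assume "b \<in> Basis"
  then obtain i where b: "b = axis i 1" by (auto simp: Basis_vec_def)
  have "((\<lambda>x. \<Sum>a\<in>A i. g i a * exp (rvec a \<bullet> x)) has_derivative
        (\<lambda>v. \<Sum>a\<in>A i. g i a * ((rvec a \<bullet> v) * exp (rvec a \<bullet> z)))) (at z)"
    by (intro has_derivative_sum has_derivative_mult_right has_derivative_exp
        has_derivative_inner_right has_derivative_ident)
  then show "((\<lambda>x. expsum A g x \<bullet> b) has_derivative (\<lambda>v. expsum_deriv A g z v \<bullet> b)) (at z)"
    by (simp add: b inner_axis expsum_def expsum_deriv_def mult_ac)
qed

lemma linear_expsum_deriv: "linear (expsum_deriv A g z)"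
  using has_derivative_expsum by (rule has_derivative_linear)

lemma norm_expsum_deriv_diff_le:
  fixes A :: "'d::finite \<Rightarrow> (int^'d) set"
  shows "norm (expsum_deriv A g z v - expsum_deriv A g0 z0 v)
    \<le> (\<Sum>i\<in>UNIV. \<Sum>a\<in>A i. \<bar>g i a * exp (rvec a \<bullet> z) - g0 i a * exp (rvec a \<bullet> z0)\<bar> * norm (rvec a))
        * norm v"
proof -
  have "norm (expsum_deriv A g z v - expsum_deriv A g0 z0 v)
      \<le> (\<Sum>i\<in>UNIV. \<bar>(expsum_deriv A g z v - expsum_deriv A g0 z0 v) $ i\<bar>)"
    by (rule norm_le_l1_cart)
  also have "\<dots> \<le> (\<Sum>i\<in>UNIV. \<Sum>a\<in>A i.
      \<bar>g i a * exp (rvec a \<bullet> z) - g0 i a * exp (rvec a \<bullet> z0)\<bar> * norm (rvec a) * norm v)"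
  proof (rule sum_mono)
    fix i
    have "\<bar>(expsum_deriv A g z v - expsum_deriv A g0 z0 v) $ i\<bar> =
        \<bar>\<Sum>a\<in>A i. (g i a * exp (rvec a \<bullet> z) - g0 i a * exp (rvec a \<bullet> z0)) * (rvec a \<bullet> v)\<bar>"
      by (simp add: expsum_deriv_def sum_subtractf[symmetric] algebra_simps)
    also have "\<dots> \<le> (\<Sum>a\<in>A i.
        \<bar>g i a * exp (rvec a \<bullet> z) - g0 i a * exp (rvec a \<bullet> z0)\<bar> * norm (rvec a) * norm v)"
      by (rule order_trans[OF sum_abs sum_mono])
         (simp add: abs_mult mult.assoc mult_left_mono Cauchy_Schwarz_ineq2)
    finally show "\<bar>(expsum_deriv A g z v - expsum_deriv A g0 z0 v) $ i\<bar> \<le> \<dots>" .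
  qed
  finally show ?thesis
    by (simp add: sum_distrib_right)
qed

lemma expsum_deriv_uniformly_close:
  fixes g :: "'p \<Rightarrow> 'd::finite \<Rightarrow> int^'d \<Rightarrow> real"
  assumes lim: "\<And>i a. a \<in> A i \<Longrightarrow> ((\<lambda>t. g t i a) \<longlongrightarrow> g0 i a) F" and "e > 0"
  shows "\<exists>r>0. eventually (\<lambda>t. \<forall>z\<in>cball z0 r. \<forall>v.
           norm (expsum_deriv A (g t) z v - expsum_deriv A g0 z0 v) \<le> e * norm v) F"
proof -
  define \<Phi> where "\<Phi> p = (\<Sum>i\<in>UNIV. \<Sum>a\<in>A i.
    \<bar>g (fst p) i a * exp (rvec a \<bullet> snd p) - g0 i a * exp (rvec a \<bullet> z0)\<bar> * norm (rvec a))" for p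
  have "(\<Phi> \<longlongrightarrow> (\<Sum>i\<in>UNIV. \<Sum>a\<in>A i.
      \<bar>g0 i a * exp (rvec a \<bullet> z0) - g0 i a * exp (rvec a \<bullet> z0)\<bar> * norm (rvec a))) (F \<times>\<^sub>F nhds z0)"
    unfolding \<Phi>_def
    by (intro tendsto_intros tendsto_sum filterlim_compose[OF lim filterlim_fst] filterlim_snd)
  then have "eventually (\<lambda>p. \<Phi> p < e) (F \<times>\<^sub>F nhds z0)"
    using order_tendstoD(2) \<open>e > 0\<close> by simp
  then obtain Pf Pz where Pf: "eventually Pf F" and Pz: "eventually Pz (nhds z0)"
    and small: "\<And>t z. Pf t \<Longrightarrow> Pz z \<Longrightarrow> \<Phi> (t, z) < e"
    unfolding eventually_prod_filter by blast
  obtain r where "r > 0" and r: "\<And>z. dist z z0 < r \<Longrightarrow> Pz z"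
    using Pz unfolding eventually_nhds_metric by blast
  show ?thesis
  proof (intro exI[of _ "r/2"] conjI)
    show "eventually (\<lambda>t. \<forall>z\<in>cball z0 (r/2). \<forall>v.
        norm (expsum_deriv A (g t) z v - expsum_deriv A g0 z0 v) \<le> e * norm v) F"
    proof (rule eventually_mono[OF Pf], intro ballI allI)
      fix t z v assume "Pf t" and "z \<in> cball z0 (r/2)"
      then have "\<Phi> (t, z) < e"
        using small r \<open>r > 0\<close> by (simp add: dist_commute)
      then show "norm (expsum_deriv A (g t) z v - expsum_deriv A g0 z0 v) \<le> e * norm v"
        using norm_expsum_deriv_diff_le[of A "g t" z v g0 z0] unfolding \<Phi>_def fst_conv snd_conv
        by (meson mult_right_mono norm_ge_zero order_trans less_imp_le)
    qed
  qed (use \<open>r > 0\<close> in simp)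
qed

lemma expsum_eq_on_support:
  assumes "\<And>i. finite (A i)" and "\<And>i. B i \<subseteq> A i"
    and "\<And>i a. a \<in> A i \<Longrightarrow> a \<notin> B i \<Longrightarrow> g i a = 0"
  shows "expsum A g = expsum B g" and "expsum_deriv A g = expsum_deriv B g"
  using assms by (auto simp: fun_eq_iff vec_eq_iff expsum_def expsum_deriv_def
      intro!: sum.mono_neutral_right)

lemma binomial_system_nondegenerate_zero:
  fixes a1 a2 :: "'d::finite \<Rightarrow> int^'d"
  assumes ne: "\<And>i. a1 i \<noteq> a2 i"
    and sign: "\<And>i. g i (a1 i) * g i (a2 i) < 0"
    and inv: "invertible (\<chi> i. rvec (a1 i) - rvec (a2 i))"
  obtains z where "expsum (\<lambda>i. {a1 i, a2 i}) g z = 0"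
    and "inj (expsum_deriv (\<lambda>i. {a1 i, a2 i}) g z)"
proof -
  define M :: "real^'d^'d" where "M = (\<chi> i. rvec (a1 i) - rvec (a2 i))"
  have Mv: "(M *v v) $ i = rvec (a1 i) \<bullet> v - rvec (a2 i) \<bullet> v" for v i
    by (simp add: M_def matrix_vector_mul_component inner_diff_left)
  have invM: "invertible M"
    unfolding M_def by (rule inv)
  obtain B where "M ** B = mat 1"
    using invM invertible_def by blast
  define z where "z = B *v (\<chi> i. ln (- g i (a2 i) / g i (a1 i)))"
  have z: "M *v z = (\<chi> i. ln (- g i (a2 i) / g i (a1 i)))"
    by (simp add: z_def matrix_vector_mul_assoc \<open>M ** B = mat 1\<close>)
  have g1: "g i (a1 i) \<noteq> 0" for i
    using sign[of i] by auto
  have balance: "g i (a2 i) * exp (rvec (a2 i) \<bullet> z) = - (g i (a1 i) * exp (rvec (a1 i) \<bullet> z))" for i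
  proof -
    have "- g i (a2 i) / g i (a1 i) > 0"
      using sign[of i] by (auto simp: mult_less_0_iff divide_neg_pos divide_pos_neg)
    moreover have "rvec (a1 i) \<bullet> z = ln (- g i (a2 i) / g i (a1 i)) + rvec (a2 i) \<bullet> z"
      using Mv[of z i] z by simp
    ultimately have "exp (rvec (a1 i) \<bullet> z) = - g i (a2 i) / g i (a1 i) * exp (rvec (a2 i) \<bullet> z)"
      by (simp add: exp_add)
    then show ?thesis
      using g1[of i] by (simp add: field_simps)
  qed
  have deriv: "expsum_deriv (\<lambda>i. {a1 i, a2 i}) g z v $ i = g i (a1 i) * exp (rvec (a1 i) \<bullet> z) * (M *v v) $ i"
    for v i
    using balance[of i] ne[of i] by (simp add: expsum_deriv_def Mv right_diff_distrib)
  show ?thesis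
  proof
    show "expsum (\<lambda>i. {a1 i, a2 i}) g z = 0"
      using ne by (simp add: vec_eq_iff expsum_def balance)
    show "inj (expsum_deriv (\<lambda>i. {a1 i, a2 i}) g z)"
    proof (rule linear_inj_iff_eq_0[OF linear_expsum_deriv, THEN iffD2], intro allI impI)
      fix v assume "expsum_deriv (\<lambda>i. {a1 i, a2 i}) g z v = 0"
      then have "M *v v = 0"
        using g1 by (simp add: vec_eq_iff deriv)
      then show "v = 0"
        using invM invertible_left_inverse matrix_left_invertible_ker by blast
    qed
  qed
qed

section \<open>Cells of regular subdivisions of the Cayley configuration\<close>

lemma cay_pt_rvec: "cay_pt a i = (rvec a, axis i 1)"
  by (simp add: cay_pt_def rvec_def)

lemma rvec_eq_iff: "rvec a = rvec b \<longleftrightarrow> a = b"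
  by (simp add: rvec_def vec_eq_iff)

lemma cay_pt_eq_iff: "cay_pt a i = cay_pt b j \<longleftrightarrow> a = b \<and> i = j"
  by (simp add: cay_pt_rvec rvec_eq_iff axis_eq_axis)

lemma finite_cayley:
  assumes "\<And>i. finite (A i)"
  shows "finite (cayley A)"
proof -
  have "cayley A = (\<Union>i. (\<lambda>a. cay_pt a i) ` A i)"
    by (auto simp: cayley_def)
  then show ?thesis
    using assms by simp
qed

lemma cayley_edge_matrix_invertible:
  fixes a1 a2 :: "'d::finite \<Rightarrow> int^'d"
  assumes indep: "\<not> affine_dependent S" and "finite S"
    and mem: "\<And>i. cay_pt (a1 i) i \<in> S" "\<And>i. cay_pt (a2 i) i \<in> S" and ne: "\<And>i. a1 i \<noteq> a2 i"
  shows "invertible (\<chi> i. rvec (a1 i) - rvec (a2 i))"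
  unfolding invertible_right_inverse matrix_right_invertible_independent_rows
proof (rule allI, rule impI)
  fix \<mu> assume "(\<Sum>i\<in>UNIV. \<mu> i *s row i (\<chi> i. rvec (a1 i) - rvec (a2 i))) = 0"
  then have rel: "(\<Sum>i\<in>UNIV. \<mu> i *\<^sub>R (rvec (a1 i) - rvec (a2 i))) = 0"
    by (simp add: row_def scalar_mult_eq_scaleR vec_lambda_eta flip: vector_minus_component)
  show "\<forall>i. \<mu> i = 0"
  proof (rule ccontr)
    assume "\<not> (\<forall>i. \<mu> i = 0)"
    then obtain j where "\<mu> j \<noteq> 0" by blast
    define u where "u q = (\<Sum>i\<in>UNIV. (if q = cay_pt (a1 i) i then \<mu> i else 0)
                                     - (if q = cay_pt (a2 i) i then \<mu> i else 0))" for q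
    have "sum u S = 0"
      unfolding u_def by (subst sum.swap) (simp add: sum_subtractf sum.delta[OF \<open>finite S\<close>] mem)
    moreover have "u (cay_pt (a1 j) j) \<noteq> 0"
    proof -
      have "u (cay_pt (a1 j) j) = (\<Sum>i\<in>UNIV. if j = i then \<mu> i else 0)"
        unfolding u_def by (intro sum.cong) (auto simp: cay_pt_eq_iff ne)
      then show ?thesis using \<open>\<mu> j \<noteq> 0\<close> by simp
    qed
    moreover have "(\<Sum>q\<in>S. u q *\<^sub>R q) = 0"
    proof -
      have "(\<Sum>q\<in>S. u q *\<^sub>R q) = (\<Sum>q\<in>S. \<Sum>i\<in>UNIV.
          (if q = cay_pt (a1 i) i then \<mu> i *\<^sub>R cay_pt (a1 i) i else 0)
          - (if q = cay_pt (a2 i) i then \<mu> i *\<^sub>R cay_pt (a2 i) i else 0))"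
        unfolding u_def scaleR_sum_left by (intro sum.cong refl) (auto simp: scaleR_diff_left)
      also have "\<dots> = (\<Sum>i\<in>UNIV. \<mu> i *\<^sub>R cay_pt (a1 i) i - \<mu> i *\<^sub>R cay_pt (a2 i) i)"
        by (subst sum.swap) (simp add: sum_subtractf sum.delta[OF \<open>finite S\<close>] mem)
      also have "\<dots> = 0"
        using rel by (simp add: prod_eq_iff fst_sum snd_sum cay_pt_rvec scaleR_diff_right)
      finally show ?thesis .
    qed
    ultimately have "affine_dependent S"
      unfolding affine_dependent_explicit_finite[OF \<open>finite S\<close>] using mem(1)[of j] by blast
    with indep show False by simp
  qed
qed

lemma occurs_in_reg_subdiv_imp_supporting:
  assumes "occurs_in_reg_subdiv P h S"
  obtains b n where "\<And>q. q \<in> P \<Longrightarrow> b \<le> n \<bullet> q + h q"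
    and "\<And>q. q \<in> P \<Longrightarrow> n \<bullet> q + h q = b \<longleftrightarrow> q \<in> S"
proof -
  define Q where "Q = convex hull ((\<lambda>q. (q, h q)) ` P)"
  obtain F where "lower_face P h F" and S: "S = {q \<in> P. (q, h q) \<in> F}"
    using assms unfolding occurs_in_reg_subdiv_def by blast
  then obtain u where "F \<noteq> {}" and "snd u > 0" and F: "F = {x \<in> Q. \<forall>y\<in>Q. inner u x \<le> inner u y}"
    unfolding lower_face_def Let_def Q_def by blast
  obtain x0 where "x0 \<in> F" using \<open>F \<noteq> {}\<close> by blast
  obtain n u3 where u: "u = (n, u3)" by (cases u)
  have "u3 > 0" using \<open>snd u > 0\<close> u by simp
  have lifted: "(q, h q) \<in> Q" if "q \<in> P" for q
    unfolding Q_def by (rule hull_inc) (use that in auto)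
  define v where "v q = (1 / u3) *\<^sub>R n \<bullet> q + h q" for q
  have inner_lifted: "inner u (q, h q) = u3 * v q" for q
    using \<open>u3 > 0\<close> by (simp add: u v_def algebra_simps)
  show thesis
  proof (rule that[of "inner u x0 / u3" "(1 / u3) *\<^sub>R n"], unfold v_def[symmetric])
    fix q assume "q \<in> P"
    have "inner u x0 \<le> inner u (q, h q)"
      using \<open>x0 \<in> F\<close> lifted[OF \<open>q \<in> P\<close>] F by blast
    then show "inner u x0 / u3 \<le> v q"
      using \<open>u3 > 0\<close> by (simp add: inner_lifted divide_le_eq mult.commute)
    have "(q, h q) \<in> F \<longleftrightarrow> inner u (q, h q) = inner u x0"
      using \<open>x0 \<in> F\<close> lifted[OF \<open>q \<in> P\<close>] \<open>inner u x0 \<le> inner u (q, h q)\<close> F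
      by (auto intro: antisym)
    then show "v q = inner u x0 / u3 \<longleftrightarrow> q \<in> S"
      using \<open>u3 > 0\<close> \<open>q \<in> P\<close> S by (auto simp: inner_lifted eq_divide_eq mult.commute)
  qed
qed

lemma occurs_in_reg_subdiv_if_supporting:
  assumes "S \<subseteq> P" and "S \<noteq> {}"
    and above: "\<And>q. q \<in> P \<Longrightarrow> b \<le> n \<bullet> q + h q"
    and on: "\<And>q. q \<in> P \<Longrightarrow> n \<bullet> q + h q = b \<longleftrightarrow> q \<in> S"
  shows "occurs_in_reg_subdiv P h S"
proof -
  define Q where "Q = convex hull ((\<lambda>q. (q, h q)) ` P)"
  define u where "u = (n, 1::real)"
  define F where "F = {x \<in> Q. \<forall>y\<in>Q. inner u x \<le> inner u y}"
  have inner_lifted: "inner u (q, h q) = n \<bullet> q + h q" for q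
    by (simp add: u_def)
  have Q_above: "Q \<subseteq> {y. b \<le> inner u y}"
    unfolding Q_def by (rule hull_minimal) (use above in \<open>auto simp: inner_lifted convex_halfspace_ge\<close>)
  have lifted: "(q, h q) \<in> Q" if "q \<in> P" for q
    unfolding Q_def by (rule hull_inc) (use that in auto)
  obtain s where "s \<in> S" using \<open>S \<noteq> {}\<close> by blast
  have F_iff: "(q, h q) \<in> F \<longleftrightarrow> q \<in> S" if "q \<in> P" for q
  proof
    assume "(q, h q) \<in> F"
    moreover have "s \<in> P"
      using \<open>s \<in> S\<close> \<open>S \<subseteq> P\<close> by auto
    moreover note lifted[OF this]
    ultimately have "n \<bullet> q + h q \<le> n \<bullet> s + h s"
      by (auto simp: F_def inner_lifted simp del: inner_Pair)
    then have "n \<bullet> q + h q \<le> b"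
      using on[of s] \<open>s \<in> S\<close> \<open>s \<in> P\<close> by simp
    then show "q \<in> S"
      using above[OF that] on[OF that] by simp
  next
    assume "q \<in> S"
    then show "(q, h q) \<in> F"
      using on[OF that] Q_above lifted[OF that] by (auto simp: F_def inner_lifted)
  qed
  have "lower_face P h F"
    unfolding lower_face_def Let_def Q_def[symmetric]
  proof (intro conjI exI[of _ u])
    show "F \<noteq> {}" using F_iff[of s] \<open>s \<in> S\<close> \<open>S \<subseteq> P\<close> by blast
  qed (simp_all add: u_def F_def)
  moreover have "S = {q \<in> P. (q, h q) \<in> F}"
    using F_iff \<open>S \<subseteq> P\<close> by blast
  ultimately show ?thesis
    unfolding occurs_in_reg_subdiv_def by blast
qed

text \<open>
  A cell normal (w, \<lambda>) encodes a lower face of the lifted Cayley configuration with inner normal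
  (w, \<lambda>, 1); the slack of (a, e_i) is the height of its lift above the supporting hyperplane.
\<close>

definition slack :: "('d::finite pt \<Rightarrow> real) \<Rightarrow> real^'d \<Rightarrow> ('d \<Rightarrow> real) \<Rightarrow> 'd \<Rightarrow> int^'d \<Rightarrow> real" where
  "slack h w lam i a = rvec a \<bullet> w + lam i + h (cay_pt a i)"

definition cell_normal ::
  "('d::finite \<Rightarrow> (int^'d) set) \<Rightarrow> ('d pt \<Rightarrow> real) \<Rightarrow> 'd pt set \<Rightarrow> real^'d \<Rightarrow> ('d \<Rightarrow> real) \<Rightarrow> bool" where
  "cell_normal A h S w lam \<longleftrightarrow>
     (\<forall>i. \<forall>a\<in>A i. 0 \<le> slack h w lam i a \<and> (slack h w lam i a = 0 \<longleftrightarrow> cay_pt a i \<in> S))"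

lemma cell_normal_if_occurs:
  assumes "occurs_in_reg_subdiv (cayley A) h S"
  obtains w lam where "cell_normal A h S w lam"
proof -
  obtain b n where above: "\<And>q. q \<in> cayley A \<Longrightarrow> b \<le> n \<bullet> q + h q"
    and on: "\<And>q. q \<in> cayley A \<Longrightarrow> n \<bullet> q + h q = b \<longleftrightarrow> q \<in> S"
    using occurs_in_reg_subdiv_imp_supporting[OF assms] by metis
  obtain w u where n: "n = (w, u)" by (cases n)
  have slack_eq: "slack h w (\<lambda>i. u $ i - b) i a = n \<bullet> cay_pt a i + h (cay_pt a i) - b" for i a
    by (simp add: slack_def n cay_pt_rvec inner_axis inner_commute)
  have "cell_normal A h S w (\<lambda>i. u $ i - b)"
    unfolding cell_normal_def
  proof (intro allI ballI)
    fix i a assume "a \<in> A i"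
    then have "cay_pt a i \<in> cayley A"
      by (auto simp: cayley_def)
    then show "0 \<le> slack h w (\<lambda>i. u $ i - b) i a \<and> (slack h w (\<lambda>i. u $ i - b) i a = 0 \<longleftrightarrow> cay_pt a i \<in> S)"
      using above on by (simp add: slack_eq)
  qed
  then show thesis by (rule that)
qed

lemma mixed_simplex_meets_colour:
  assumes "mixed_simplex A S"
  obtains a where "a \<in> A i" and "cay_pt a i \<in> S"
proof -
  have "card {a. a \<in> A i \<and> cay_pt a i \<in> S} = 2"
    using assms by (simp add: mixed_simplex_def)
  then have "{a. a \<in> A i \<and> cay_pt a i \<in> S} \<noteq> {}"
    by (metis card.empty zero_neq_numeral)
  then show thesis using that by blast
qed

lemma cell_normal_determines_mixed_cell:
  assumes mixed: "mixed_simplex A S" "mixed_simplex A S'"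
    and normal: "cell_normal A h S w lam" "cell_normal A h S' w lam'"
  shows "S = S'"
proof -
  have shift: "slack h w lam' i a = slack h w lam i a + (lam' i - lam i)" for i a
    by (simp add: slack_def)
  have "lam i \<le> lam' i" "lam' i \<le> lam i" for i
  proof -
    obtain a where "a \<in> A i" "cay_pt a i \<in> S"
      using mixed(1) by (rule mixed_simplex_meets_colour)
    then show "lam i \<le> lam' i"
      using normal shift[of i a] unfolding cell_normal_def by force
    obtain a' where "a' \<in> A i" "cay_pt a' i \<in> S'"
      using mixed(2) by (rule mixed_simplex_meets_colour)
    then show "lam' i \<le> lam i"
      using normal shift[of i a'] unfolding cell_normal_def by force
  qed
  then have "lam' = lam"
    by (intro ext antisym)
  moreover have "S \<subseteq> cayley A" "S' \<subseteq> cayley A"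
    using mixed by (auto simp: mixed_simplex_def is_simplex_def)
  ultimately show ?thesis
    using normal unfolding cell_normal_def cayley_def by blast
qed

section \<open>Solutions coming from positively decorated mixed cells\<close>

definition torus_pt :: "real^'d::finite \<Rightarrow> real \<Rightarrow> real^'d \<Rightarrow> real^'d" where
  "torus_pt w t z = (\<chi> k. exp (w $ k * ln t + z $ k))"

lemma monom_eq_exp:
  assumes "\<And>k. 0 < y $ k"
  shows "monom y a = exp (rvec a \<bullet> (\<chi> k. ln (y $ k)))"
proof -
  have "monom y a = (\<Prod>k\<in>UNIV. exp (real_of_int (a $ k) * ln (y $ k)))"
    unfolding monom_def using assms by (intro prod.cong refl) (simp add: powr_def less_imp_neq[symmetric])
  also have "\<dots> = exp (rvec a \<bullet> (\<chi> k. ln (y $ k)))"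
    by (simp add: exp_sum rvec_def inner_vec_def)
  finally show ?thesis .
qed

lemma det_jacobian_nonzero_if_inj:
  fixes F :: "real^'n \<Rightarrow> real^'n"
  assumes "(F has_derivative F') (at x)" and "inj F'"
  shows "det (jacobian F (at x)) \<noteq> 0"
proof -
  have "jacobian F (at x) = matrix F'"
    unfolding jacobian_def using frechet_derivative_at[OF assms(1)] by simp
  then show ?thesis
    using det_nz_iff_inj[OF has_derivative_linear[OF assms(1)]] assms(2) by simp
qed

lemma linear_scale_components: "linear (\<lambda>u::real^'n. \<chi> i. s i * u $ i)"
  by (rule linearI) (simp_all add: vec_eq_iff algebra_simps)

definition log_coords :: "real^'d::finite \<Rightarrow> real \<Rightarrow> real^'d \<Rightarrow> real^'d" where
  "log_coords w t y = (\<chi> k. ln (y $ k) - w $ k * ln t)"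

lemma log_coords_torus_pt: "log_coords w t (torus_pt w t z) = z"
  by (simp add: log_coords_def torus_pt_def vec_eq_iff)

lemma has_derivative_log_coords:
  fixes x :: "real^'d::finite"
  assumes "\<And>k. 0 < x $ k"
  shows "(log_coords w t has_derivative (\<lambda>v. \<chi> k. v $ k / x $ k)) (at x)"
proof (subst has_derivative_componentwise_within, intro ballI)
  fix b :: "real^'d" assume "b \<in> Basis"
  then obtain k where b: "b = axis k 1" by (auto simp: Basis_vec_def)
  have "((\<lambda>y::real^'d. ln (y $ k) - w $ k * ln t) has_derivative (\<lambda>v. v $ k * inverse (x $ k))) (at x)"
    using assms[of k]
    by (auto intro!: derivative_eq_intros bounded_linear_imp_has_derivative bounded_linear_vec_nth)
  then show "((\<lambda>y. log_coords w t y \<bullet> b) has_derivative (\<lambda>v. (\<chi> k. v $ k / x $ k) \<bullet> b)) (at x)"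
    by (simp add: b inner_axis log_coords_def divide_inverse)
qed

lemma sys_eq_scaled_expsum:
  fixes A :: "'d::finite \<Rightarrow> (int^'d) set" and w :: "real^'d"
  assumes "t > 0" and "\<And>k. 0 < y $ k"
    and coeff: "\<And>i a. a \<in> A i \<Longrightarrow> g i a = c i a * t powr slack h w lam i a"
  shows "sys A c h t y = (\<chi> i. exp (- lam i * ln t) * expsum A g (log_coords w t y) $ i)"
proof -
  have "c i a * t powr h (cay_pt a i) * monom y a
      = exp (- lam i * ln t) * (g i a * exp (rvec a \<bullet> log_coords w t y))" if "a \<in> A i" for i a
  proof -
    have "(\<chi> k. ln (y $ k)) = log_coords w t y + ln t *\<^sub>R w"
      by (simp add: log_coords_def vec_eq_iff)
    then have "monom y a = exp (rvec a \<bullet> log_coords w t y + ln t * (rvec a \<bullet> w))"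
      using monom_eq_exp[of y a] assms(2) by (simp add: inner_add_right)
    then show ?thesis
      using coeff[OF that] \<open>t > 0\<close>
      by (simp add: slack_def powr_def algebra_simps flip: exp_add exp_minus_inverse)
  qed
  then show ?thesis
    by (simp add: vec_eq_iff sys_def expsum_def sum_distrib_left)
qed

lemma nondeg_pos_solution_if_expsum_zero:
  fixes A :: "'d::finite \<Rightarrow> (int^'d) set"
  assumes "t > 0"
    and coeff: "\<And>i a. a \<in> A i \<Longrightarrow> g i a = c i a * t powr slack h w lam i a"
    and zero: "expsum A g z = 0" and inj: "inj (expsum_deriv A g z)"
  shows "nondeg_pos_solution (sys A c h t) (torus_pt w t z)"
proof -
  define x where "x = torus_pt w t z"
  define Pos :: "(real^'d) set" where "Pos = {y. \<forall>k. 0 < y $ k}"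
  define D where "D u = (\<chi> i. exp (- lam i * ln t) * u $ i)" for u :: "real^'d"
  define dlog where "dlog v = (\<chi> k. v $ k / x $ k)" for v :: "real^'d"
  have "x \<in> Pos"
    by (simp add: x_def torus_pt_def Pos_def)
  have log_x: "log_coords w t x = z"
    by (simp add: x_def log_coords_torus_pt)
  have "open Pos"
    unfolding Pos_def Collect_all_eq by (intro open_INT finite_class.finite_UNIV ballI open_Collect_less continuous_intros)
  have sys_eq: "sys A c h t y = D (expsum A g (log_coords w t y))" if "y \<in> Pos" for y
    unfolding D_def using sys_eq_scaled_expsum[OF \<open>t > 0\<close> _ coeff] that by (simp add: Pos_def)
  have "((\<lambda>y. expsum A g (log_coords w t y)) has_derivative (\<lambda>v. expsum_deriv A g z (dlog v))) (at x)"
    using has_derivative_compose[OF has_derivative_log_coords[of x w t] has_derivative_expsum, of A g]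
      \<open>x \<in> Pos\<close> log_x by (simp add: Pos_def dlog_def)
  moreover have "linear D"
    unfolding D_def by (rule linear_scale_components)
  ultimately have "((\<lambda>y. D (expsum A g (log_coords w t y))) has_derivative (\<lambda>v. D (expsum_deriv A g z (dlog v))))
      (at x)"
    by (rule has_derivative_compose[OF _ linear_imp_has_derivative])
  then have deriv: "(sys A c h t has_derivative (\<lambda>v. D (expsum_deriv A g z (dlog v)))) (at x)"
    by (rule has_derivative_transform_within_open[OF _ \<open>open Pos\<close> \<open>x \<in> Pos\<close>]) (rule sys_eq[symmetric])
  have "inj D"
    by (auto intro!: injI simp: D_def vec_eq_iff)
  moreover have "inj dlog"
    using \<open>x \<in> Pos\<close> by (auto intro!: injI simp: dlog_def vec_eq_iff Pos_def) (metis less_irrefl)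
  ultimately have "inj (D \<circ> expsum_deriv A g z \<circ> dlog)"
    using inj by (intro inj_compose)
  with deriv have "det (jacobian (sys A c h t) (at x)) \<noteq> 0"
    unfolding comp_def by (rule det_jacobian_nonzero_if_inj)
  moreover have "sys A c h t x = 0"
    using sys_eq[OF \<open>x \<in> Pos\<close>] log_x zero by (simp add: D_def vec_eq_iff)
  moreover have "sys A c h t differentiable (at x)"
    using deriv by (auto simp: differentiable_def)
  ultimately show ?thesis
    using \<open>x \<in> Pos\<close> unfolding nondeg_pos_solution_def x_def Pos_def by simp
qed

lemma tendsto_powr_at_right_0:
  assumes "0 \<le> e"
  shows "((\<lambda>t::real. t powr e) \<longlongrightarrow> (if e = 0 then 1 else 0)) (at_right 0)"
proof (cases "e = 0")
  case True
  have "eventually (\<lambda>t::real. 1 = t powr e) (at_right 0)"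
    using eventually_at_right_less[of "0::real"] by eventually_elim (simp add: True)
  then show ?thesis
    using True by (simp add: tendsto_eventually)
next
  case False
  then have "((\<lambda>t::real. t powr e) \<longlongrightarrow> 0) (at_right 0)"
    using assms eventually_at_right_less[of "0::real"]
    by (intro tendsto_zero_powrI[OF tendsto_ident_at tendsto_const]) (auto elim: eventually_mono)
  then show ?thesis
    using False by simp
qed

lemma mixed_cell_system_nondegenerate_zero:
  fixes A :: "'d::finite \<Rightarrow> (int^'d) set"
  assumes finA: "\<And>i. finite (A i)"
    and mixed: "mixed_simplex A S" and pos: "pos_decorated A c S"
  obtains z0 where "expsum A (\<lambda>i a. if cay_pt a i \<in> S then c i a else 0) z0 = 0"
    and "inj (expsum_deriv A (\<lambda>i a. if cay_pt a i \<in> S then c i a else 0) z0)"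
proof -
  define g0 where "g0 = (\<lambda>i a. if cay_pt a i \<in> S then c i a else 0)"
  obtain a1 a2 where cell: "\<And>i. {a. a \<in> A i \<and> cay_pt a i \<in> S} = {a1 i, a2 i}"
    and ne: "\<And>i. a1 i \<noteq> a2 i" and sign: "\<And>i. c i (a1 i) * c i (a2 i) < 0"
    using pos unfolding pos_decorated_def by metis
  have mem: "a1 i \<in> A i" "a2 i \<in> A i" "cay_pt (a1 i) i \<in> S" "cay_pt (a2 i) i \<in> S" for i
    using cell[of i] by blast+
  have inv: "invertible (\<chi> i. rvec (a1 i) - rvec (a2 i))"
    using mixed mem ne by (intro cayley_edge_matrix_invertible) (auto simp: mixed_simplex_def is_simplex_def)
  have off_cell: "g0 i a = 0" if "a \<in> A i" "a \<notin> {a1 i, a2 i}" for i a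
    using that cell[of i] by (auto simp: g0_def)
  have supp: "expsum A g0 = expsum (\<lambda>i. {a1 i, a2 i}) g0"
    "expsum_deriv A g0 = expsum_deriv (\<lambda>i. {a1 i, a2 i}) g0"
    by (rule expsum_eq_on_support[OF finA], use mem off_cell in auto)+
  obtain z0 where "expsum (\<lambda>i. {a1 i, a2 i}) g0 z0 = 0"
    and "inj (expsum_deriv (\<lambda>i. {a1 i, a2 i}) g0 z0)"
  proof (rule binomial_system_nondegenerate_zero[OF ne _ inv])
    show "g0 i (a1 i) * g0 i (a2 i) < 0" for i
      using sign mem by (simp add: g0_def)
  qed
  then have "expsum A g0 z0 = 0" and "inj (expsum_deriv A g0 z0)"
    by (simp_all only: supp)
  then show thesis
    unfolding g0_def by (rule that)
qed

lemma mixed_cell_eventually_solution: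
  fixes A :: "'d::finite \<Rightarrow> (int^'d) set"
  assumes finA: "\<And>i. finite (A i)"
    and mixed: "mixed_simplex A S" and pos: "pos_decorated A c S"
    and normal: "cell_normal A h S w lam"
  obtains z0 where
    "eventually (\<lambda>t. \<exists>z\<in>cball z0 1. nondeg_pos_solution (sys A c h t) (torus_pt w t z)) (at_right 0)"
proof -
  define g where "g t i a = c i a * t powr slack h w lam i a" for t :: real and i a
  define g0 where "g0 = (\<lambda>i a. if cay_pt a i \<in> S then c i a else 0)"
  obtain z0 where zero0: "expsum A g0 z0 = 0" and inj0: "inj (expsum_deriv A g0 z0)"
    by (rule mixed_cell_system_nondegenerate_zero[OF finA mixed pos, folded g0_def])
  have lim: "((\<lambda>t. g t i a) \<longlongrightarrow> g0 i a) (at_right 0)" if "a \<in> A i" for i a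
  proof -
    have "0 \<le> slack h w lam i a" and "slack h w lam i a = 0 \<longleftrightarrow> cay_pt a i \<in> S"
      using normal that unfolding cell_normal_def by blast+
    then show ?thesis
      using tendsto_mult[OF tendsto_const tendsto_powr_at_right_0, of "slack h w lam i a" "c i a"]
      by (simp add: g_def g0_def split: if_splits)
  qed
  have "eventually (\<lambda>t. \<exists>z\<in>cball z0 1. expsum A (g t) z = 0 \<and> inj (expsum_deriv A (g t) z))
      (at_right 0)"
  proof (rule nondegenerate_zero_persists[OF linear_expsum_deriv inj0 has_derivative_expsum])
    show "\<exists>r>0. eventually (\<lambda>t. \<forall>z\<in>cball z0 r. \<forall>v.
        norm (expsum_deriv A (g t) z v - expsum_deriv A g0 z0 v) \<le> e * norm v) (at_right 0)"
      if "e > 0" for e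
      using lim that by (rule expsum_deriv_uniformly_close)
    have "((\<lambda>t. expsum A (g t) z0) \<longlongrightarrow> expsum A g0 z0) (at_right 0)"
      unfolding expsum_def by (intro tendsto_vec_lambda tendsto_sum tendsto_mult lim tendsto_const)
    then show "((\<lambda>t. expsum A (g t) z0) \<longlongrightarrow> 0) (at_right 0)"
      by (simp add: zero0)
  qed simp
  then have "eventually (\<lambda>t. \<exists>z\<in>cball z0 1. nondeg_pos_solution (sys A c h t) (torus_pt w t z))
      (at_right 0)"
    using eventually_at_right_less[of "0::real"]
    by eventually_elim (use nondeg_pos_solution_if_expsum_zero g_def in blast)
  then show thesis by (rule that)
qed

lemma torus_pts_eventually_distinct:
  assumes "w \<noteq> w'"
  shows "eventually (\<lambda>t. \<forall>z\<in>cball z0 1. \<forall>z'\<in>cball z0' 1. torus_pt w t z \<noteq> torus_pt w' t z')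
           (at_right 0)"
proof -
  obtain k where "w $ k \<noteq> w' $ k"
    using assms by (auto simp: vec_eq_iff)
  define d where "d = \<bar>w $ k - w' $ k\<bar>"
  define B where "B = \<bar>z0 $ k - z0' $ k\<bar> + 2"
  have "d > 0"
    using \<open>w $ k \<noteq> w' $ k\<close> by (simp add: d_def)
  have "eventually (\<lambda>t. ln t \<le> - (B / d) - 1) (at_right (0::real))"
    using ln_at_0 unfolding filterlim_at_bot by blast
  then show ?thesis
  proof (rule eventually_mono, intro ballI notI)
    fix t z z' assume t: "ln t \<le> - (B / d) - 1"
      and z: "z \<in> cball z0 1" and z': "z' \<in> cball z0' 1"
      and eq: "torus_pt w t z = torus_pt w' t z'"
    have "(w $ k - w' $ k) * ln t = z' $ k - z $ k"
      using arg_cong[OF eq, of "\<lambda>x. ln (x $ k)"] by (simp add: torus_pt_def algebra_simps)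
    then have "d * \<bar>ln t\<bar> = \<bar>z' $ k - z $ k\<bar>"
      by (simp add: d_def flip: abs_mult)
    also have "\<dots> \<le> B"
      using component_le_norm_cart[of "z - z0" k] component_le_norm_cart[of "z' - z0'" k] z z'
      by (simp add: B_def dist_norm norm_minus_commute)
    also have "B < d * \<bar>ln t\<bar>"
    proof -
      have "B / d + 1 \<le> \<bar>ln t\<bar>"
        using t by linarith
      then have "d * (B / d + 1) \<le> d * \<bar>ln t\<bar>"
        using \<open>d > 0\<close> by (simp add: mult_left_mono)
      moreover have "d * (B / d + 1) = B + d"
        using \<open>d > 0\<close> by (simp add: field_simps)
      ultimately show ?thesis
        using \<open>d > 0\<close> by linarith
    qed
    finally show False by simp
  qed
qed

lemma many_solutions_if_eventually_distinct:
  assumes "finite D"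
    and ev: "eventually (\<lambda>t. \<exists>x. inj_on x D \<and> (\<forall>S\<in>D. nondeg_pos_solution (sys A c h t) (x S)))
      (at_right 0)"
  shows "many_solutions A c h (card D)"
proof -
  obtain t0 :: real where "t0 > 0"
    and sols: "\<And>t. 0 < t \<Longrightarrow> t < t0 \<Longrightarrow>
      \<exists>x. inj_on x D \<and> (\<forall>S\<in>D. nondeg_pos_solution (sys A c h t) (x S))"
    using ev unfolding eventually_at_right_field by auto
  show ?thesis
    unfolding many_solutions_def
  proof (intro exI[of _ t0] conjI allI impI)
    fix t assume "0 < t \<and> t < t0"
    then obtain x where "inj_on x D" and "\<forall>S\<in>D. nondeg_pos_solution (sys A c h t) (x S)"
      using sols by blast
    then show "\<exists>X. finite X \<and> card D \<le> card X \<and> (\<forall>x\<in>X. nondeg_pos_solution (sys A c h t) x)"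
      using \<open>finite D\<close> by (intro exI[of _ "x ` D"]) (simp add: card_image)
  qed (rule \<open>t0 > 0\<close>)
qed

lemma many_solutions_if_separated_branches:
  assumes "finite D" and "inj_on W D"
    and sol: "\<And>S. S \<in> D \<Longrightarrow> eventually (\<lambda>t. \<exists>z\<in>cball (Z S) 1.
      nondeg_pos_solution (sys A c h t) (torus_pt (W S) t z)) (at_right 0)"
  shows "many_solutions A c h (card D)"
proof (rule many_solutions_if_eventually_distinct[OF \<open>finite D\<close>])
  have apart: "eventually (\<lambda>t. S \<noteq> S' \<longrightarrow> (\<forall>z\<in>cball (Z S) 1. \<forall>z'\<in>cball (Z S') 1.
      torus_pt (W S) t z \<noteq> torus_pt (W S') t z')) (at_right 0)"
    if "S \<in> D" "S' \<in> D" for S S'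
  proof (cases "S = S'")
    case False
    then have "W S \<noteq> W S'"
      using \<open>inj_on W D\<close> that by (auto dest: inj_onD)
    then show ?thesis
      using torus_pts_eventually_distinct[of "W S" "W S'"] False by simp
  qed simp
  have "eventually (\<lambda>t. \<forall>S\<in>D. \<exists>z\<in>cball (Z S) 1.
      nondeg_pos_solution (sys A c h t) (torus_pt (W S) t z)) (at_right 0)"
    by (intro eventually_ball_finite[OF \<open>finite D\<close>] ballI sol)
  moreover have "eventually (\<lambda>t. \<forall>S\<in>D. \<forall>S'\<in>D. S \<noteq> S' \<longrightarrow>
      (\<forall>z\<in>cball (Z S) 1. \<forall>z'\<in>cball (Z S') 1. torus_pt (W S) t z \<noteq> torus_pt (W S') t z'))
      (at_right 0)"
    by (intro eventually_ball_finite[OF \<open>finite D\<close>] ballI apart)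
  ultimately show "eventually (\<lambda>t. \<exists>x. inj_on x D \<and> (\<forall>S\<in>D. nondeg_pos_solution (sys A c h t) (x S)))
      (at_right 0)"
  proof eventually_elim
    case (elim t)
    obtain z where z: "\<forall>S\<in>D. z S \<in> cball (Z S) 1 \<and>
        nondeg_pos_solution (sys A c h t) (torus_pt (W S) t (z S))"
      using elim(1) unfolding Bex_def by (rule bchoice[elim_format]) blast
    then have "inj_on (\<lambda>S. torus_pt (W S) t (z S)) D"
      using elim(2) by (meson inj_onI)
    then show ?case
      using z by (intro exI[of _ "\<lambda>S. torus_pt (W S) t (z S)"]) simp
  qed
qed

lemma many_solutions_of_mixed_cells:
  fixes A :: "'d::finite \<Rightarrow> (int^'d) set"
  assumes finA: "\<And>i. finite (A i)" and "finite D"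
    and cells: "\<And>S. S \<in> D \<Longrightarrow>
      mixed_simplex A S \<and> pos_decorated A c S \<and> occurs_in_reg_subdiv (cayley A) h S"
  shows "many_solutions A c h (card D)"
proof -
  have "\<forall>S\<in>D. \<exists>w lam. cell_normal A h S w lam"
    using cells by (blast elim: cell_normal_if_occurs)
  then obtain W \<Lambda> where normal: "\<And>S. S \<in> D \<Longrightarrow> cell_normal A h S (W S) (\<Lambda> S)"
    by (auto dest!: bchoice)
  have "\<forall>S\<in>D. \<exists>z0. eventually (\<lambda>t. \<exists>z\<in>cball z0 1.
      nondeg_pos_solution (sys A c h t) (torus_pt (W S) t z)) (at_right 0)"
  proof
    fix S assume "S \<in> D"
    show "\<exists>z0. eventually (\<lambda>t. \<exists>z\<in>cball z0 1.
        nondeg_pos_solution (sys A c h t) (torus_pt (W S) t z)) (at_right 0)"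
      by (rule mixed_cell_eventually_solution[OF finA _ _ normal[OF \<open>S \<in> D\<close>]])
        (use cells[OF \<open>S \<in> D\<close>] in auto)
  qed
  then obtain Z where sol: "\<And>S. S \<in> D \<Longrightarrow> eventually (\<lambda>t. \<exists>z\<in>cball (Z S) 1.
      nondeg_pos_solution (sys A c h t) (torus_pt (W S) t z)) (at_right 0)"
    by (auto dest!: bchoice)
  have "inj_on W D"
  proof (rule inj_onI)
    fix S S' assume "S \<in> D" "S' \<in> D" "W S = W S'"
    then have "cell_normal A h S' (W S) (\<Lambda> S')"
      using normal by simp
    moreover have "mixed_simplex A S" "mixed_simplex A S'"
      using cells \<open>S \<in> D\<close> \<open>S' \<in> D\<close> by blast+
    ultimately show "S = S'"
      using cell_normal_determines_mixed_cell normal[OF \<open>S \<in> D\<close>] by blast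
  qed
  with \<open>finite D\<close> show ?thesis
    using sol by (rule many_solutions_if_separated_branches)
qed

section \<open>Two simplices sharing a facet\<close>

lemma exists_functional_vanishing_on_affine_hull:
  fixes T :: "'a::euclidean_space set"
  assumes "t0 \<in> T" and "p \<notin> affine hull T"
  obtains n where "\<And>x. x \<in> affine hull T \<Longrightarrow> n \<bullet> (x - t0) = 0" and "0 < n \<bullet> (p - t0)"
proof -
  define V where "V = (\<lambda>x. - t0 + x) ` (T - {t0})"
  have hull: "affine hull T = (\<lambda>x. t0 + x) ` span V"
    unfolding V_def by (rule affine_hull_span2[OF \<open>t0 \<in> T\<close>])
  obtain y n where "y \<in> span V" and orth: "\<And>v. v \<in> span V \<Longrightarrow> orthogonal n v" and "p - t0 = y + n"
    using orthogonal_subspace_decomp_exists by blast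
  show thesis
  proof
    show "n \<bullet> (x - t0) = 0" if "x \<in> affine hull T" for x
      using that orth by (auto simp: hull orthogonal_def)
    have "n \<noteq> 0"
      using \<open>p \<notin> affine hull T\<close> \<open>y \<in> span V\<close> \<open>p - t0 = y + n\<close> hull
      by (metis add.right_neutral diff_add_cancel image_eqI add.commute)
    then show "0 < n \<bullet> (p - t0)"
      using orth[OF \<open>y \<in> span V\<close>] \<open>p - t0 = y + n\<close> by (simp add: orthogonal_def inner_add_right)
  qed
qed

lemma segment_from_barycentre_meets_convex_hull:
  fixes T :: "'a::real_vector set"
  assumes "finite T" "T \<noteq> {}" "p \<notin> T"
    and sum1: "sum \<beta> (insert p T) = 1" and "0 \<le> \<beta> p"
  obtains s where "0 < s" "s \<le> 1"
    "(1 - s) *\<^sub>R (\<Sum>t\<in>T. (1 / card T) *\<^sub>R t) + s *\<^sub>R (\<Sum>q\<in>insert p T. \<beta> q *\<^sub>R q)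
       \<in> convex hull (insert p T)"
proof -
  define N where "N = real (card T)"
  define M where "M = (\<Sum>t\<in>T. \<bar>\<beta> t\<bar>)"
  define s where "s = 1 / (1 + N * M)"
  have "N > 0" "M \<ge> 0"
    using assms by (simp_all add: N_def M_def card_gt_0_iff sum_nonneg)
  then have "1 \<le> 1 + N * M"
    by simp
  then have "0 < s" "s \<le> 1" and "s * (1 + N * M) = 1"
    by (simp_all add: s_def)
  then have sM: "s * M = (1 - s) / N"
    using \<open>N > 0\<close> by (simp add: field_simps)
  define u where "u q = (if q = p then s * \<beta> p else (1 - s) / N + s * \<beta> q)" for q
  have u_nonneg: "0 \<le> u q" if "q \<in> insert p T" for q
  proof (cases "q = p")
    case False
    then have "q \<in> T" using that by simp
    then have "s * \<bar>\<beta> q\<bar> \<le> s * M"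
      unfolding M_def using \<open>finite T\<close> \<open>0 < s\<close> by (intro mult_left_mono member_le_sum) auto
    moreover have "s * - \<bar>\<beta> q\<bar> \<le> s * \<beta> q"
      using \<open>0 < s\<close> by (intro mult_left_mono) auto
    ultimately show ?thesis
      using False sM by (simp add: u_def)
  qed (use \<open>0 < s\<close> \<open>0 \<le> \<beta> p\<close> in \<open>simp add: u_def\<close>)
  have u_T: "u q = (1 - s) / N + s * \<beta> q" if "q \<in> T" for q
    using that \<open>p \<notin> T\<close> by (auto simp: u_def)
  have u_p: "u p = s * \<beta> p"
    by (simp add: u_def)
  have "sum u (insert p T) = s * \<beta> p + ((1 - s) + s * sum \<beta> T)"
    using assms \<open>N > 0\<close> by (simp add: u_T u_p sum.distrib sum_distrib_left N_def)
  also have "\<dots> = s * sum \<beta> (insert p T) + (1 - s)"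
    using \<open>finite T\<close> \<open>p \<notin> T\<close> by (simp add: algebra_simps)
  finally have u_sum: "sum u (insert p T) = 1"
    using sum1 by simp
  have "(\<Sum>q\<in>insert p T. u q *\<^sub>R q)
      = (s * \<beta> p) *\<^sub>R p + (\<Sum>q\<in>T. ((1 - s) / N) *\<^sub>R q + s *\<^sub>R (\<beta> q *\<^sub>R q))"
    using assms by (simp add: u_T u_p scaleR_add_left)
  also have "\<dots> = (1 - s) *\<^sub>R (\<Sum>t\<in>T. (1 / card T) *\<^sub>R t) + s *\<^sub>R (\<Sum>q\<in>insert p T. \<beta> q *\<^sub>R q)"
    using assms by (simp add: N_def sum.distrib scaleR_sum_right scaleR_add_right)
  finally show thesis
    using that[OF \<open>0 < s\<close> \<open>s \<le> 1\<close>] u_nonneg u_sum \<open>finite T\<close>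
    unfolding convex_hull_finite[OF finite.insertI[OF \<open>finite T\<close>]] by blast
qed

lemma cayley_subset_affine_hull_simplex:
  fixes A :: "'d::finite \<Rightarrow> (int^'d) set"
  assumes "is_simplex (cayley A) S"
  shows "cayley A \<subseteq> affine hull S"
proof -
  define H :: "'d pt set" where "H = {x. (0, \<chi> k. 1) \<bullet> x = 1}"
  have cayley_H: "cayley A \<subseteq> H"
    by (auto simp: H_def cayley_def cay_pt_rvec inner_axis)
  have "\<not> affine_dependent S" "card S = 2 * CARD('d)" "S \<subseteq> cayley A"
    using assms by (auto simp: is_simplex_def)
  then have "aff_dim S = int (2 * CARD('d)) - 1" and "S \<noteq> {}"
    using aff_dim_affine_independent[of S] by auto
  moreover have "aff_dim H = int (2 * CARD('d)) - 1"
  proof -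
    have "(0, \<chi> k. 1) \<noteq> (0 :: 'd pt)"
      by (simp add: vec_eq_iff zero_prod_def)
    moreover have "int (CARD('d) + CARD('d) - Suc 0) = 2 * int CARD('d) - 1"
      using zero_less_card_finite[where 'a='d] by linarith
    ultimately show ?thesis
      unfolding H_def by (subst aff_dim_hyperplane) auto
  qed
  moreover have "affine H"
    unfolding H_def by (rule affine_hyperplane)
  moreover have "affine hull S \<subseteq> H"
    using \<open>S \<subseteq> cayley A\<close> cayley_H \<open>affine H\<close> by (intro hull_minimal) auto
  ultimately have "affine hull S = H"
    by (intro affine_dim_equal) auto
  then show ?thesis
    using cayley_H by simp
qed

lemma share_facet_common_facet:
  assumes "\<not> affine_dependent S1" "\<not> affine_dependent S2" and "share_facet S1 S2"
  obtains T p1 p2 where "S1 = insert p1 T" "S2 = insert p2 T" "p1 \<notin> T" "p2 \<notin> T"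
    and "convex hull S1 \<inter> convex hull S2 = convex hull T"
proof -
  obtain p1 where "p1 \<in> S1" and facet1: "convex hull S1 \<inter> convex hull S2 = convex hull (S1 - {p1})"
    using assms(3) unfolding share_facet_def facet_of_convex_hull_affine_independent[OF assms(1)] by blast
  obtain p2 where "p2 \<in> S2" and facet2: "convex hull S1 \<inter> convex hull S2 = convex hull (S2 - {p2})"
    using assms(3) unfolding share_facet_def facet_of_convex_hull_affine_independent[OF assms(2)] by blast
  have "\<not> affine_dependent (S1 - {p1})" "\<not> affine_dependent (S2 - {p2})"
    using assms affine_dependent_subset by blast+
  then have "S1 - {p1} = S2 - {p2}"
    using facet1 facet2 by (metis extreme_point_of_convex_hull_affine_independent subsetI subset_antisym)
  then show thesis
    using that[of p1 "S1 - {p1}" p2] \<open>p1 \<in> S1\<close> \<open>p2 \<in> S2\<close> facet1 by (metis Diff_iff insertI1 insert_Diff)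
qed

lemma inner_affine_combination_insert:
  fixes n :: "'a::real_inner"
  assumes "finite T" "p \<notin> T" and sum1: "sum \<beta> (insert p T) = 1"
    and T: "\<And>x. x \<in> T \<Longrightarrow> n \<bullet> (x - t0) = 0"
  shows "n \<bullet> ((\<Sum>q\<in>insert p T. \<beta> q *\<^sub>R q) - t0) = \<beta> p * (n \<bullet> (p - t0))"
proof -
  have "(\<Sum>q\<in>insert p T. \<beta> q *\<^sub>R q) - t0 = (\<Sum>q\<in>insert p T. \<beta> q *\<^sub>R (q - t0))"
    using sum1 by (simp add: scaleR_diff_right sum_subtractf flip: scaleR_sum_left)
  then show ?thesis
    using assms by (simp add: inner_add_right inner_sum_right)
qed

lemma affine_coefficient_nonzero_if_not_in_hull:
  assumes "finite T" "p \<notin> T" and "sum \<beta> (insert p T) = 1"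
    and "(\<Sum>q\<in>insert p T. \<beta> q *\<^sub>R q) \<notin> affine hull T"
  shows "\<beta> p \<noteq> 0"
proof
  assume "\<beta> p = 0"
  then have "sum \<beta> T = 1" and "(\<Sum>q\<in>insert p T. \<beta> q *\<^sub>R q) = (\<Sum>q\<in>T. \<beta> q *\<^sub>R q)"
    using assms by simp_all
  then show False
    using assms(4) affine_hull_finite[OF \<open>finite T\<close>] by auto
qed

lemma opposite_sides_of_common_facet:
  fixes n :: "'a::euclidean_space"
  assumes "finite T" "T \<noteq> {}" "p1 \<notin> T"
    and p2_hull: "p2 \<in> affine hull (insert p1 T)" and "p2 \<notin> affine hull T"
    and inter: "convex hull (insert p1 T) \<inter> convex hull (insert p2 T) \<subseteq> convex hull T"
    and l_T: "\<And>x. x \<in> affine hull T \<Longrightarrow> n \<bullet> (x - t0) = 0"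
    and l_p1: "0 < n \<bullet> (p1 - t0)"
  shows "n \<bullet> (p2 - t0) < 0"
proof -
  define l where "l x = n \<bullet> (x - t0)" for x
  obtain \<beta> where sum1: "sum \<beta> (insert p1 T) = 1" and p2: "(\<Sum>q\<in>insert p1 T. \<beta> q *\<^sub>R q) = p2"
    using p2_hull affine_hull_finite[of "insert p1 T"] \<open>finite T\<close> by auto
  have l_p2: "l p2 = \<beta> p1 * l p1"
    unfolding l_def p2[symmetric] using assms sum1 l_T[OF hull_inc]
    by (intro inner_affine_combination_insert) auto
  have "\<beta> p1 \<noteq> 0"
    using assms sum1 p2 by (intro affine_coefficient_nonzero_if_not_in_hull) auto
  then have "l p2 \<noteq> 0"
    using l_p2 l_p1 by (simp add: l_def)
  moreover have "\<not> l p2 > 0"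
  proof
    assume "l p2 > 0"
    then have "0 \<le> \<beta> p1"
      using l_p2 l_p1 by (simp add: l_def zero_less_mult_iff)
    define g where "g = (\<Sum>t\<in>T. (1 / card T) *\<^sub>R t)"
    obtain s where "0 < s" "s \<le> 1" and in1: "(1 - s) *\<^sub>R g + s *\<^sub>R p2 \<in> convex hull (insert p1 T)"
      using segment_from_barycentre_meets_convex_hull[OF \<open>finite T\<close> \<open>T \<noteq> {}\<close> \<open>p1 \<notin> T\<close> sum1 \<open>0 \<le> \<beta> p1\<close>]
      unfolding p2 g_def by blast
    have "g \<in> convex hull T"
      using \<open>finite T\<close> \<open>T \<noteq> {}\<close> unfolding g_def convex_hull_finite[OF \<open>finite T\<close>]
      by (intro CollectI exI[of _ "\<lambda>_. 1 / card T"]) simp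
    then have "(1 - s) *\<^sub>R g + s *\<^sub>R p2 \<in> convex hull (insert p2 T)"
      using \<open>0 < s\<close> \<open>s \<le> 1\<close> hull_mono[of T "insert p2 T"] hull_inc[of p2 "insert p2 T"]
      by (intro convexD[OF convex_convex_hull]) auto
    with in1 inter have "l ((1 - s) *\<^sub>R g + s *\<^sub>R p2) = 0"
      using convex_hull_subset_affine_hull l_T unfolding l_def by blast
    moreover have "l g = 0"
      using \<open>g \<in> convex hull T\<close> convex_hull_subset_affine_hull l_T by (auto simp: l_def)
    ultimately show False
      using \<open>0 < s\<close> \<open>l p2 > 0\<close> by (simp add: l_def inner_diff_right inner_add_right algebra_simps)
  qed
  ultimately show ?thesis
    by (simp add: l_def)
qed

lemma occurs_in_reg_subdiv_abs_height:
  assumes "U \<subseteq> P" and S: "S = {q \<in> U. 0 \<le> n \<bullet> q + b}" "S \<noteq> {}"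
    and h_U: "\<And>q. q \<in> U \<Longrightarrow> h q = \<bar>n \<bullet> q + b\<bar>"
    and h_out: "\<And>q. q \<in> P \<Longrightarrow> q \<notin> U \<Longrightarrow> \<bar>n \<bullet> q + b\<bar> < h q"
  shows "occurs_in_reg_subdiv P h S"
proof (rule occurs_in_reg_subdiv_if_supporting[where n = "- n" and b = b])
  fix q assume "q \<in> P"
  then have "n \<bullet> q + b \<le> h q \<and> (n \<bullet> q + b = h q \<longleftrightarrow> q \<in> S)"
    using h_U h_out[of q] S(1) by (cases "q \<in> U") auto
  then show "b \<le> - n \<bullet> q + h q" and "- n \<bullet> q + h q = b \<longleftrightarrow> q \<in> S"
    by auto
qed (use assms in auto)

lemma adjacent_simplices_separated:
  fixes A :: "'d::finite \<Rightarrow> (int^'d) set"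
  assumes simplex: "is_simplex (cayley A) S1" "is_simplex (cayley A) S2"
    and "share_facet S1 S2"
  obtains n b where "S1 = {q \<in> S1 \<union> S2. 0 \<le> n \<bullet> q + b}" and "S2 = {q \<in> S1 \<union> S2. 0 \<le> - n \<bullet> q + - b}"
proof -
  have indep: "\<not> affine_dependent S1" "\<not> affine_dependent S2"
    and "finite S1" "card S1 = 2 * CARD('d)" and "S2 \<subseteq> cayley A"
    using simplex by (auto simp: is_simplex_def)
  obtain T p1 p2 where S1: "S1 = insert p1 T" and S2: "S2 = insert p2 T" and "p1 \<notin> T" "p2 \<notin> T"
    and inter: "convex hull S1 \<inter> convex hull S2 = convex hull T"
    by (rule share_facet_common_facet[OF indep \<open>share_facet S1 S2\<close>])
  have "finite T"
    using \<open>finite S1\<close> S1 by simp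
  have "T \<noteq> {}"
    using \<open>card S1 = 2 * CARD('d)\<close> zero_less_card_finite[where 'a='d] S1 by auto
  then obtain t0 where "t0 \<in> T" by blast
  have "p1 \<notin> affine hull T" "p2 \<notin> affine hull T"
    using indep S1 S2 \<open>p1 \<notin> T\<close> \<open>p2 \<notin> T\<close> unfolding affine_dependent_def by force+
  obtain n where l_T: "\<And>x. x \<in> affine hull T \<Longrightarrow> n \<bullet> (x - t0) = 0" and l_p1: "0 < n \<bullet> (p1 - t0)"
    by (rule exists_functional_vanishing_on_affine_hull[OF \<open>t0 \<in> T\<close> \<open>p1 \<notin> affine hull T\<close>]) blast
  have "p2 \<in> affine hull (insert p1 T)"
    using cayley_subset_affine_hull_simplex[OF simplex(1)] \<open>S2 \<subseteq> cayley A\<close> S1 S2 by auto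
  then have l_p2: "n \<bullet> (p2 - t0) < 0"
    using opposite_sides_of_common_facet[OF \<open>finite T\<close> \<open>T \<noteq> {}\<close> \<open>p1 \<notin> T\<close> _ \<open>p2 \<notin> affine hull T\<close> _ l_T l_p1]
      inter S1 S2 by blast
  show thesis
  proof (rule that[of n "- (n \<bullet> t0)"])
    show "S1 = {q \<in> S1 \<union> S2. 0 \<le> n \<bullet> q + - (n \<bullet> t0)}"
      using l_T[OF hull_inc] l_p1 l_p2 by (auto simp: S1 S2 inner_diff_right)
    show "S2 = {q \<in> S1 \<union> S2. 0 \<le> - n \<bullet> q + - (- (n \<bullet> t0))}"
      using l_T[OF hull_inc] l_p1 l_p2 by (auto simp: S1 S2 inner_diff_right)
  qed
qed

lemma adjacent_simplices_common_subdivision: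
  fixes A :: "'d::finite \<Rightarrow> (int^'d) set"
  assumes finA: "\<And>i. finite (A i)"
    and simplex: "is_simplex (cayley A) S1" "is_simplex (cayley A) S2"
    and "share_facet S1 S2"
  obtains h where "occurs_in_reg_subdiv (cayley A) h S1" and "occurs_in_reg_subdiv (cayley A) h S2"
proof -
  obtain n b where S1: "S1 = {q \<in> S1 \<union> S2. 0 \<le> n \<bullet> q + b}"
    and S2: "S2 = {q \<in> S1 \<union> S2. 0 \<le> - n \<bullet> q + - b}"
    by (rule adjacent_simplices_separated[OF simplex \<open>share_facet S1 S2\<close>])
  define K where "K = 1 + (\<Sum>q\<in>cayley A. \<bar>n \<bullet> q + b\<bar>)"
  have K: "\<bar>n \<bullet> q + b\<bar> < K" if "q \<in> cayley A" for q
    using member_le_sum[of q "cayley A" "\<lambda>q. \<bar>n \<bullet> q + b\<bar>"] finite_cayley[OF finA] that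
    by (simp add: K_def)
  have abs_neg: "\<bar>- n \<bullet> q + - b\<bar> = \<bar>n \<bullet> q + b\<bar>" for q
  proof -
    have "- n \<bullet> q + - b = - (n \<bullet> q + b)"
      by simp
    then show ?thesis
      by (simp only: abs_minus_cancel)
  qed
  define h where "h q = (if q \<in> S1 \<union> S2 then \<bar>n \<bullet> q + b\<bar> else K)" for q
  have "S1 \<union> S2 \<subseteq> cayley A"
    using simplex by (auto simp: is_simplex_def)
  have "S1 \<noteq> {}" "S2 \<noteq> {}"
    using simplex by (auto simp: is_simplex_def)
  show thesis
  proof
    show "occurs_in_reg_subdiv (cayley A) h S1"
      by (rule occurs_in_reg_subdiv_abs_height[OF \<open>S1 \<union> S2 \<subseteq> cayley A\<close> S1 \<open>S1 \<noteq> {}\<close>])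
        (use K in \<open>auto simp: h_def\<close>)
    show "occurs_in_reg_subdiv (cayley A) h S2"
      by (rule occurs_in_reg_subdiv_abs_height[OF \<open>S1 \<union> S2 \<subseteq> cayley A\<close> S2 \<open>S2 \<noteq> {}\<close>])
        (use K abs_neg in \<open>auto simp: h_def\<close>)
  qed
qed

theorem theorem3p2:
  fixes A :: "'d::finite \<Rightarrow> (int^'d) set"
    and c :: "'d \<Rightarrow> int^'d \<Rightarrow> real"
  assumes finA: "\<And>i. finite (A i)"
    and has_simplex: "\<exists>S. is_simplex (cayley A) S"
    and c_zero: "\<And>i a. a \<notin> A i \<Longrightarrow> c i a = 0"
  shows "(\<forall>(h :: 'd pt \<Rightarrow> real) (D :: 'd pt set set).
            finite D \<and>
            (\<forall>S\<in>D. mixed_simplex A S \<and> pos_decorated A c S \<and>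
                     occurs_in_reg_subdiv (cayley A) h S)
            \<longrightarrow> many_solutions A c h (card D))
       \<and> (\<forall>S1 S2. mixed_simplex A S1 \<and> pos_decorated A c S1 \<and>
                  mixed_simplex A S2 \<and> pos_decorated A c S2 \<and>
                  S1 \<noteq> S2 \<and> share_facet S1 S2
            \<longrightarrow> (\<exists>h. occurs_in_reg_subdiv (cayley A) h S1 \<and>
                     occurs_in_reg_subdiv (cayley A) h S2 \<and>
                     many_solutions A c h 2))"
proof (intro conjI allI impI)
  fix h :: "'d pt \<Rightarrow> real" and D :: "'d pt set set"
  assume "finite D \<and> (\<forall>S\<in>D. mixed_simplex A S \<and> pos_decorated A c S \<and> occurs_in_reg_subdiv (cayley A) h S)"
  then show "many_solutions A c h (card D)"
    by (intro many_solutions_of_mixed_cells[OF finA]) auto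
next
  fix S1 S2 :: "'d pt set"
  assume H: "mixed_simplex A S1 \<and> pos_decorated A c S1 \<and> mixed_simplex A S2 \<and> pos_decorated A c S2 \<and>
    S1 \<noteq> S2 \<and> share_facet S1 S2"
  then have simplices: "is_simplex (cayley A) S1" "is_simplex (cayley A) S2"
    by (simp_all add: mixed_simplex_def)
  obtain h where h: "occurs_in_reg_subdiv (cayley A) h S1" "occurs_in_reg_subdiv (cayley A) h S2"
    by (rule adjacent_simplices_common_subdivision[OF finA simplices]) (use H in auto)
  have "many_solutions A c h (card {S1, S2})"
    by (rule many_solutions_of_mixed_cells[OF finA]) (use H h in auto)
  moreover have "card {S1, S2} = 2"
    using H by simp
  ultimately show "\<exists>h. occurs_in_reg_subdiv (cayley A) h S1 \<and> occurs_in_reg_subdiv (cayley A) h S2 \<and>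
      many_solutions A c h 2"
    using h by auto
qed

end
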